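(* Let $C_n=((v_0,\dots,v_{n-1}),c)$ be an edge-colored oriented cycle of order $n$. Suppose there exist $i,j\in[n]$ with $i\neq j$ such that for every $s\in[n]$ at least one of the following holds (which one may depend on $s$): $c(e_{i+s-1})=c(e_{j+s-1})$ and $c(e_{i+s})=c(e_{j+s})$; or $c(e_{i+s-1})=\overline{c(e_{j+s})}$ and $c(e_{i+s})=\overline{c(e_{j+s-1})}$. Then one of the following holds: (1) the map $v_x\mapsto v_{x+j-i}$ ($x\in[n]$) is a color respecting automorphism of $C_n$; or (2) the map $v_x\mapsto v_{x+2}$ ($x\in[n]$) is a color respecting automorphism of $C_n$ and $c(e)_1=0$ for every edge $e$ of $C_n$.
   Context: All indices are taken modulo $n$. Let $v_0,\dots,v_{n-1}$ be distinct vertices, $e_i=\{v_i,v_{i+1}\}$, and $A$ a set of colors. An edge-colored oriented cycle is $C_n=((v_0,\dots,v_{n-1}),c)$ with $c:\{e_0,\dots,e_{n-1}\}\to\mathbb F_3\times A$; $c(e)_1\in\mathbb F_3$ is the orientation and $c(e)_2\in A$ the undirected color, and $\overline{c(e)}:=(-c(e)_1,c(e)_2)$. A bijection $\varphi$ of $\{v_0,\dots,v_{n-1}\}$ is a color respecting automorphism if for every $i$ there is $j$ with $\{\varphi(v_i),\varphi(v_{i+1})\}=\{v_j,v_{j+1}\}$ and the color of $e_i$ satisfies $c(e_i)=c(e_j)$ if $(\varphi(v_i),\varphi(v_{i+1}))=(v_j,v_{j+1})$, and $c(e_i)=\overline{c(e_j)}$ if $(\varphi(v_i),\varphi(v_{i+1}))=(v_{j+1},v_j)$.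 *)

theory Defs
  imports Main "HOL-Library.Numeral_Type"
begin

text \<open>An edge-colored oriented cycle of order n: distinct vertices vx 0, ..., vx (n-1)
(vx injective on {..<n}), edges e_k = {v_k, v_(k+1)} with indices taken modulo n,
and a coloring c of the edges with values in F_3 x A (F_3 is the numeral type 3).\<close>

definition cyc_vert :: "nat \<Rightarrow> (nat \<Rightarrow> 'v) \<Rightarrow> int \<Rightarrow> 'v" where
  "cyc_vert n vx k = vx (nat (k mod int n))"

definition cyc_edge :: "nat \<Rightarrow> (nat \<Rightarrow> 'v) \<Rightarrow> int \<Rightarrow> 'v set" where
  "cyc_edge n vx k = {cyc_vert n vx k, cyc_vert n vx (k + 1)}"

definition cyc_col :: "nat \<Rightarrow> (nat \<Rightarrow> 'v) \<Rightarrow> ('v set \<Rightarrow> 3 \<times> 'a) \<Rightarrow> int \<Rightarrow> 3 \<times> 'a" where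
  "cyc_col n vx c k = c (cyc_edge n vx k)"

definition col_bar :: "3 \<times> 'a \<Rightarrow> 3 \<times> 'a" where
  "col_bar x = (- fst x, snd x)"

definition cyc_verts :: "nat \<Rightarrow> (nat \<Rightarrow> 'v) \<Rightarrow> 'v set" where
  "cyc_verts n vx = vx ` {..<n}"

definition color_resp_aut ::
  "nat \<Rightarrow> (nat \<Rightarrow> 'v) \<Rightarrow> ('v set \<Rightarrow> 3 \<times> 'a) \<Rightarrow> ('v \<Rightarrow> 'v) \<Rightarrow> bool" where
  "color_resp_aut n vx c \<phi> \<longleftrightarrow>
     bij_betw \<phi> (cyc_verts n vx) (cyc_verts n vx) \<and>
     (\<forall>i\<in>{0..<int n}. \<exists>j\<in>{0..<int n}.
        {\<phi> (cyc_vert n vx i), \<phi> (cyc_vert n vx (i + 1))} = {cyc_vert n vx j, cyc_vert n vx (j + 1)} \<and>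
        ((\<phi> (cyc_vert n vx i), \<phi> (cyc_vert n vx (i + 1))) = (cyc_vert n vx j, cyc_vert n vx (j + 1))
           \<longrightarrow> cyc_col n vx c i = cyc_col n vx c j) \<and>
        ((\<phi> (cyc_vert n vx i), \<phi> (cyc_vert n vx (i + 1))) = (cyc_vert n vx (j + 1), cyc_vert n vx j)
           \<longrightarrow> cyc_col n vx c i = col_bar (cyc_col n vx c j)))"

text \<open>The rotation map v_x \<mapsto> v_(x+d) on the vertex set (arbitrary outside it).\<close>
definition cyc_rot :: "nat \<Rightarrow> (nat \<Rightarrow> 'v) \<Rightarrow> int \<Rightarrow> 'v \<Rightarrow> 'v" where
  "cyc_rot n vx d y = cyc_vert n vx (int (the_inv_into {..<n} vx y) + d)"

end

theory Submission
  imports Defs "HOL-Library.Periodic_Fun"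
begin

text \<open>Write a t for the colour of e_t and d = j - i. At every t either a agrees with its
shift by d on the edge pair (e_(t-1), e_t), or it agrees with it after reversing and
barring. A pair where the plain agreement fails forces the next pair to fail as well,
so by periodicity the plain agreement holds either everywhere, which makes the rotation
by d an automorphism, or nowhere. In the latter case the reversed agreement at two
consecutive pairs yields a (t + 2) = a t; then d must be odd (for even d the plain
agreement would hold), so a (t + d - 1) = a t, and the reversed agreement becomes
a t = col_bar (a t), i.e. every orientation is 0 in F_3.\<close>

lemma cyc_vert_cong: "k mod int n = k' mod int n \<Longrightarrow> cyc_vert n vx k = cyc_vert n vx k'"
  by (simp add: cyc_vert_def)

lemma cyc_col_cong:
  assumes "k mod int n = k' mod int n"
  shows "cyc_col n vx c k = cyc_col n vx c k'"
proof -
  have "(k + 1) mod int n = (k' + 1) mod int n"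
    using assms by (metis mod_add_left_eq)
  with assms show ?thesis
    by (simp add: cyc_col_def cyc_edge_def cyc_vert_def)
qed

lemma cyc_rot_cyc_vert:
  assumes "n > 0" and "inj_on vx {..<n}"
  shows "cyc_rot n vx d (cyc_vert n vx k) = cyc_vert n vx (k + d)"
proof -
  have "the_inv_into {..<n} vx (cyc_vert n vx k) = nat (k mod int n)"
    using assms by (simp add: cyc_vert_def the_inv_into_f_f nat_less_iff)
  then have "cyc_rot n vx d (cyc_vert n vx k) = cyc_vert n vx (k mod int n + d)"
    using assms(1) by (simp add: cyc_rot_def)
  also have "\<dots> = cyc_vert n vx (k + d)"
    by (rule cyc_vert_cong) (simp add: mod_add_left_eq)
  finally show ?thesis .
qed

lemma cyc_verts_eq_range:
  assumes "n > 0"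
  shows "cyc_verts n vx = range (cyc_vert n vx)"
proof -
  have "vx m \<in> range (cyc_vert n vx)" if "m < n" for m
    using that rangeI[of "cyc_vert n vx" "int m"] by (simp add: cyc_vert_def)
  moreover have "cyc_vert n vx k \<in> vx ` {..<n}" for k
    using assms by (simp add: cyc_vert_def nat_less_iff)
  ultimately show ?thesis
    by (auto simp: cyc_verts_def)
qed

lemma cyc_vert_neq_next:
  assumes "n \<ge> 2" and "inj_on vx {..<n}"
  shows "cyc_vert n vx k \<noteq> cyc_vert n vx (k + 1)"
proof
  assume "cyc_vert n vx k = cyc_vert n vx (k + 1)"
  then have "nat (k mod int n) = nat ((k + 1) mod int n)"
    using assms inj_onD[OF assms(2)] by (simp add: cyc_vert_def nat_less_iff)
  then have "k mod int n = (k + 1) mod int n"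
    using assms(1) by (simp add: eq_nat_nat_iff)
  then have "int n dvd 1"
    by (metis add_diff_cancel_left' mod_eq_dvd_iff)
  with assms(1) show False
    by simp
qed

lemma bij_betw_cyc_rot:
  assumes "n > 0" and "inj_on vx {..<n}"
  shows "bij_betw (cyc_rot n vx d) (cyc_verts n vx) (cyc_verts n vx)"
  unfolding cyc_verts_eq_range[OF assms(1)]
  by (rule bij_betw_byWitness[where f' = "cyc_rot n vx (- d)"])
     (auto simp: cyc_rot_cyc_vert[OF assms])

lemma color_resp_aut_cyc_rot:
  assumes "n \<ge> 2" and "inj_on vx {..<n}"
    and period: "\<And>k. cyc_col n vx c (k + d) = cyc_col n vx c k"
  shows "color_resp_aut n vx c (cyc_rot n vx d)"
  unfolding color_resp_aut_def
proof (intro conjI ballI)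
  have "n > 0" using assms(1) by simp
  note rot = cyc_rot_cyc_vert[OF this assms(2)]
  show "bij_betw (cyc_rot n vx d) (cyc_verts n vx) (cyc_verts n vx)"
    using bij_betw_cyc_rot[OF \<open>n > 0\<close> assms(2)] .
  fix k assume "k \<in> {0..<int n}"
  define k' where "k' = (k + d) mod int n"
  have "k' \<in> {0..<int n}"
    using \<open>n > 0\<close> by (simp add: k'_def)
  moreover have "cyc_rot n vx d (cyc_vert n vx k) = cyc_vert n vx k'"
    unfolding rot by (rule cyc_vert_cong) (simp add: k'_def)
  moreover have "cyc_rot n vx d (cyc_vert n vx (k + 1)) = cyc_vert n vx (k' + 1)"
    unfolding rot by (rule cyc_vert_cong) (simp add: k'_def mod_add_right_eq ac_simps)
  moreover have "cyc_col n vx c k' = cyc_col n vx c k"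
    using cyc_col_cong[of k' n "k + d" vx c] period by (simp add: k'_def)
  ultimately show "\<exists>j\<in>{0..<int n}.
      {cyc_rot n vx d (cyc_vert n vx k), cyc_rot n vx d (cyc_vert n vx (k + 1))} =
        {cyc_vert n vx j, cyc_vert n vx (j + 1)} \<and>
      ((cyc_rot n vx d (cyc_vert n vx k), cyc_rot n vx d (cyc_vert n vx (k + 1))) =
          (cyc_vert n vx j, cyc_vert n vx (j + 1)) \<longrightarrow>
        cyc_col n vx c k = cyc_col n vx c j) \<and>
      ((cyc_rot n vx d (cyc_vert n vx k), cyc_rot n vx d (cyc_vert n vx (k + 1))) =
          (cyc_vert n vx (j + 1), cyc_vert n vx j) \<longrightarrow>
        cyc_col n vx c k = col_bar (cyc_col n vx c j))"
    using cyc_vert_neq_next[OF assms(1,2), of k'] by auto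
qed

lemma col_bar_col_bar [simp]: "col_bar (col_bar x) = x"
  by (simp add: col_bar_def)

lemma col_bar_eq_self_iff: "col_bar x = x \<longleftrightarrow> fst (x :: 3 \<times> 'a) = 0"
proof -
  have "- y = y \<longleftrightarrow> y = 0" for y :: 3
  proof (cases y)
    case (of_int z)
    then have "z = 0 \<or> z = 1 \<or> z = 2"
      by simp arith
    with of_int show ?thesis
      by auto
  qed
  from this[of "fst x"] show ?thesis
    by (simp add: col_bar_def prod_eq_iff)
qed

text \<open>The two alternatives of the hypothesis at s, with t = i + s and d = j - i.\<close>

definition agrees_at :: "(int \<Rightarrow> 'b) \<Rightarrow> int \<Rightarrow> int \<Rightarrow> bool" where
  "agrees_at a d t \<longleftrightarrow> a (t - 1) = a (t + d - 1) \<and> a t = a (t + d)"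

definition agrees_reversed_at :: "(int \<Rightarrow> 3 \<times> 'a) \<Rightarrow> int \<Rightarrow> int \<Rightarrow> bool" where
  "agrees_reversed_at a d t \<longleftrightarrow>
     a (t - 1) = col_bar (a (t + d)) \<and> a t = col_bar (a (t + d - 1))"

lemma periodic_add_cong:
  fixes m :: int
  assumes "\<And>k k'. k mod m = k' mod m \<Longrightarrow> a k = a k'" and "t mod m = t' mod m"
  shows "a (t + e) = a (t' + e)"
  by (rule assms(1)) (metis assms(2) mod_add_left_eq)

lemma agrees_at_cong:
  fixes m :: int
  assumes "\<And>k k'. k mod m = k' mod m \<Longrightarrow> a k = a k'" and "t mod m = t' mod m"
  shows "agrees_at a d t \<longleftrightarrow> agrees_at a d t'"
  using periodic_add_cong[of m a, OF assms, where e = "- 1"]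
    periodic_add_cong[of m a, OF assms, where e = 0]
    periodic_add_cong[of m a, OF assms, where e = "d - 1"]
    periodic_add_cong[of m a, OF assms, where e = d]
  by (simp add: agrees_at_def add_diff_eq)

lemma agrees_reversed_at_cong:
  fixes m :: int
  assumes "\<And>k k'. k mod m = k' mod m \<Longrightarrow> a k = a k'" and "t mod m = t' mod m"
  shows "agrees_reversed_at a d t \<longleftrightarrow> agrees_reversed_at a d t'"
  using periodic_add_cong[of m a, OF assms, where e = "- 1"]
    periodic_add_cong[of m a, OF assms, where e = 0]
    periodic_add_cong[of m a, OF assms, where e = "d - 1"]
    periodic_add_cong[of m a, OF assms, where e = d]
  by (simp add: agrees_reversed_at_def add_diff_eq)

lemma agrees_at_if_reversed_and_next:
  assumes "agrees_reversed_at a d t" and "agrees_at a d (t + 1)"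
  shows "agrees_at a d t"
proof -
  have "a t = a (t + d)"
    using assms(2) by (simp add: agrees_at_def algebra_simps)
  moreover have "a (t - 1) = col_bar (a (t + d))" and "a (t + d - 1) = col_bar (a t)"
    using assms(1) by (auto simp: agrees_reversed_at_def)
  ultimately show ?thesis
    by (simp add: agrees_at_def)
qed

lemma periodic_pred_from_window:
  fixes P :: "int \<Rightarrow> bool" and m :: int
  assumes "m > 0" and "\<And>t t'. t mod m = t' mod m \<Longrightarrow> P t \<longleftrightarrow> P t'"
    and "\<And>s. s \<in> {0..<m} \<Longrightarrow> P (i + s)"
  shows "P t"
proof -
  have "(t - i) mod m \<in> {0..<m}" and "(i + (t - i) mod m) mod m = t mod m"
    using assms(1) by (simp_all add: mod_add_right_eq)
  then show ?thesis
    using assms(2,3) by blast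
qed

lemma periodic_pred_succ_closed:
  fixes P :: "int \<Rightarrow> bool" and m :: int
  assumes "m > 0" and "\<And>t t'. t mod m = t' mod m \<Longrightarrow> P t \<longleftrightarrow> P t'"
    and "\<And>t. P t \<Longrightarrow> P (t + 1)" and "P t0"
  shows "P t"
proof (rule periodic_pred_from_window[OF assms(1,2)])
  have "P (t0 + int k)" for k
  proof (induction k)
    case 0
    show ?case using assms(4) by simp
  next
    case (Suc k)
    then have "P (t0 + int k + 1)" by (rule assms(3))
    then show ?case by (simp add: ac_simps)
  qed
  then show "P (t0 + s)" if "s \<in> {0..<m}" for s
    using that by (metis atLeastLessThan_iff nat_0_le)
qed

lemma agrees_everywhere_or_reversed_everywhere:
  fixes m :: int
  assumes "m > 0" and period: "\<And>k k'. k mod m = k' mod m \<Longrightarrow> a k = a k'"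
    and window: "\<And>s. s \<in> {0..<m} \<Longrightarrow> agrees_at a d (i + s) \<or> agrees_reversed_at a d (i + s)"
  shows "(\<forall>t. agrees_at a d t) \<or> (\<forall>t. agrees_reversed_at a d t)"
proof -
  have "(agrees_at a d t \<or> agrees_reversed_at a d t) \<longleftrightarrow>
      (agrees_at a d t' \<or> agrees_reversed_at a d t')" if "t mod m = t' mod m" for t t'
    using agrees_at_cong[of m a, OF period that] agrees_reversed_at_cong[of m a, OF period that]
    by blast
  then have alternatives: "agrees_at a d t \<or> agrees_reversed_at a d t" for t
    using periodic_pred_from_window[of m "\<lambda>t. agrees_at a d t \<or> agrees_reversed_at a d t"]
      \<open>m > 0\<close> window by blast
  show ?thesis
  proof (cases "\<forall>t. agrees_at a d t")
    case False
    then obtain t0 where "\<not> agrees_at a d t0" by blast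
    moreover have "\<not> agrees_at a d t \<longleftrightarrow> \<not> agrees_at a d t'" if "t mod m = t' mod m" for t t'
      using agrees_at_cong[of m a, OF period that] by blast
    moreover have "\<not> agrees_at a d (t + 1)" if "\<not> agrees_at a d t" for t
      using agrees_at_if_reversed_and_next alternatives that by blast
    ultimately have "\<not> agrees_at a d t" for t
      using periodic_pred_succ_closed[of m "\<lambda>t. \<not> agrees_at a d t"] \<open>m > 0\<close> by blast
    with alternatives show ?thesis by blast
  qed simp
qed

lemma reversed_everywhere_period_two:
  assumes "\<And>t. agrees_reversed_at a d t"
  shows "a (k + 2) = a k"
proof -
  have "a (k - d + 1) = col_bar (a k)"
    using assms[of "k - d + 1"] by (simp add: agrees_reversed_at_def)
  moreover have "a (k - d + 1) = col_bar (a (k + 2))"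
    using assms[of "k - d + 2"] by (simp add: agrees_reversed_at_def algebra_simps)
  ultimately show ?thesis
    by (metis col_bar_col_bar)
qed

lemma reversed_everywhere_fst_zero:
  assumes reversed: "\<And>t. agrees_reversed_at a d t" and "\<not> agrees_at a d t0"
  shows "fst (a k) = 0"
proof -
  interpret periodic_fun_simple a 2
    by standard (rule reversed_everywhere_period_two[OF reversed])
  have "odd d"
  proof
    assume "even d"
    then obtain z where "d = z * 2"
      by (auto elim: evenE)
    then have "agrees_at a d t0"
      using plus_of_int[of "t0 - 1" z] plus_of_int[of t0 z] by (simp add: agrees_at_def algebra_simps)
    with assms(2) show False ..
  qed
  then obtain z where "d = z * 2 + 1"
    by (auto elim: oddE)
  then have "a (k + d - 1) = a k"
    using plus_of_int[of k z] by (simp add: algebra_simps)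
  then have "col_bar (a k) = a k"
    using reversed[of k] by (simp add: agrees_reversed_at_def)
  then show ?thesis
    by (simp add: col_bar_eq_self_iff)
qed

theorem mainTheorem14:
  fixes n :: nat and vx :: "nat \<Rightarrow> 'v" and c :: "'v set \<Rightarrow> 3 \<times> 'a" and i j :: int
  assumes "n \<ge> 3"
    and "inj_on vx {..<n}"
    and "i \<in> {0..<int n}" and "j \<in> {0..<int n}" and "i \<noteq> j"
    and "\<forall>s\<in>{0..<int n}.
          (cyc_col n vx c (i + s - 1) = cyc_col n vx c (j + s - 1) \<and>
           cyc_col n vx c (i + s) = cyc_col n vx c (j + s)) \<or>
          (cyc_col n vx c (i + s - 1) = col_bar (cyc_col n vx c (j + s)) \<and>
           cyc_col n vx c (i + s) = col_bar (cyc_col n vx c (j + s - 1)))"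
  shows "color_resp_aut n vx c (cyc_rot n vx (j - i)) \<or>
         (color_resp_aut n vx c (cyc_rot n vx 2) \<and>
          (\<forall>k\<in>{0..<int n}. fst (cyc_col n vx c k) = 0))"
proof -
  define a where "a = cyc_col n vx c"
  have "n \<ge> 2" and "int n > 0" using assms(1) by simp_all
  have period: "\<And>k k'. k mod int n = k' mod int n \<Longrightarrow> a k = a k'"
    unfolding a_def by (rule cyc_col_cong)
  have "agrees_at a (j - i) (i + s) \<or> agrees_reversed_at a (j - i) (i + s)"
    if "s \<in> {0..<int n}" for s
    using bspec[OF assms(6) that]
    by (simp add: a_def agrees_at_def agrees_reversed_at_def add.commute[of j s])
  then consider "\<forall>t. agrees_at a (j - i) t"
    | t0 where "\<forall>t. agrees_reversed_at a (j - i) t" and "\<not> agrees_at a (j - i) t0"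
    using agrees_everywhere_or_reversed_everywhere[of "int n" a, OF \<open>int n > 0\<close> period] by metis
  then show ?thesis
  proof cases
    case 1
    then have "cyc_col n vx c (k + (j - i)) = cyc_col n vx c k" for k
      by (simp add: agrees_at_def a_def)
    then show ?thesis
      using color_resp_aut_cyc_rot[OF \<open>n \<ge> 2\<close> assms(2)] by blast
  next
    case (2 t0)
    then have "cyc_col n vx c (k + 2) = cyc_col n vx c k" and "fst (cyc_col n vx c k) = 0" for k
      using reversed_everywhere_period_two reversed_everywhere_fst_zero unfolding a_def by blast+
    then show ?thesis
      using color_resp_aut_cyc_rot[OF \<open>n \<ge> 2\<close> assms(2)] by blast
  qed
qed

end
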